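(* Let $G$ be a graph with $n$ vertices, $m$ edges, and maximum degree at most $\Delta$, where $\Delta$ is a positive integer, and let $I=\{1,\ldots,\Delta\}$. Suppose $x\in\mathbb{R}_{\geq 0}$, $y\in\mathbb{R}$ and $z_i\in\mathbb{R}_{\geq 0}$ for $i\in I$ satisfy $z_i+z_j\geq j-i$ for all $i,j\in I$ with $i<j$, and $x+iy\geq iz_i$ for all $i\in I$. Then $irr(G)\leq nx+2my$.
   Context: All graphs are finite, simple and undirected. For a graph $G$ with edge set $E(G)$ and vertex degrees $d_G(u)$, the irregularity (in the sense of Albertson) is $irr(G)=\sum_{uv\in E(G)}|d_G(u)-d_G(v)|$. *)

theory Defs
  imports Complex_Main
begin

definition simple_graph :: "'a set \<Rightarrow> 'a set set \<Rightarrow> bool" where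
  "simple_graph V E \<longleftrightarrow> finite V \<and> (\<forall>e\<in>E. e \<subseteq> V \<and> card e = 2)"

definition degree :: "'a set set \<Rightarrow> 'a \<Rightarrow> nat" where
  "degree E u = card {e\<in>E. u \<in> e}"

definition irr :: "'a set set \<Rightarrow> int" where
  "irr E = (\<Sum>e\<in>E. (THE k. \<exists>u v. e = {u, v} \<and> k = \<bar>int (degree E u) - int (degree E v)\<bar>))"

end

theory Submission
  imports Defs
begin

text \<open>Charge each edge \<open>uv\<close> the amount \<open>z(d u) + z(d v)\<close>, which dominates \<open>|d u - d v|\<close>
  by the hypothesis on \<open>z\<close>. Regrouped by vertices, a vertex of degree \<open>i\<close> receives
  \<open>i z(i) \<le> x + i y\<close>, and summing \<open>x + d(w) y\<close> over all vertices gives \<open>n x + 2 m y\<close>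
  by the handshake lemma.\<close>

definition edge_imbalance :: "'a set set \<Rightarrow> 'a set \<Rightarrow> int" where
  "edge_imbalance E e = (THE k. \<exists>u v. e = {u, v} \<and> k = \<bar>int (degree E u) - int (degree E v)\<bar>)"

lemma irr_eq_sum_edge_imbalance: "irr E = (\<Sum>e\<in>E. edge_imbalance E e)"
  unfolding irr_def edge_imbalance_def ..

lemma edge_imbalance_doubleton:
  "edge_imbalance E {u, v} = \<bar>int (degree E u) - int (degree E v)\<bar>"
  unfolding edge_imbalance_def
proof (rule the_equality)
  fix k assume "\<exists>u' v'. {u, v} = {u', v'} \<and> k = \<bar>int (degree E u') - int (degree E v')\<bar>"
  then show "k = \<bar>int (degree E u) - int (degree E v)\<bar>"
    by (auto simp: doubleton_eq_iff abs_minus_commute)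
qed blast

lemma simple_graph_finite_edges:
  assumes "simple_graph V E"
  shows "finite E"
proof -
  have "E \<subseteq> Pow V" using assms by (auto simp: simple_graph_def)
  then show ?thesis using assms finite_subset by (auto simp: simple_graph_def)
qed

lemma degree_ge_1:
  assumes "finite E" "e \<in> E" "w \<in> e"
  shows "degree E w \<ge> 1"
proof -
  have "{e\<in>E. w \<in> e} \<noteq> {}" using assms by auto
  then show ?thesis using assms(1) by (simp add: degree_def Suc_le_eq card_gt_0_iff)
qed

lemma sum_edges_eq_sum_degree:
  fixes f :: "'a \<Rightarrow> 'b::comm_semiring_1"
  assumes "simple_graph V E"
  shows "(\<Sum>e\<in>E. \<Sum>w\<in>e. f w) = (\<Sum>w\<in>V. of_nat (degree E w) * f w)"
proof -
  have fV: "finite V" and fE: "finite E" and sub: "\<And>e. e \<in> E \<Longrightarrow> e \<subseteq> V"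
    using assms simple_graph_finite_edges by (auto simp: simple_graph_def)
  have "(\<Sum>e\<in>E. \<Sum>w\<in>e. f w) = (\<Sum>e\<in>E. \<Sum>w\<in>V. if w \<in> e then f w else 0)"
  proof (rule sum.cong)
    fix e assume "e \<in> E"
    then have "V \<inter> e = e" using sub by auto
    then show "(\<Sum>w\<in>e. f w) = (\<Sum>w\<in>V. if w \<in> e then f w else 0)"
      using sum.inter_restrict[OF fV, of f e] by simp
  qed simp
  also have "\<dots> = (\<Sum>w\<in>V. \<Sum>e\<in>E. if w \<in> e then f w else 0)" by (rule sum.swap)
  also have "\<dots> = (\<Sum>w\<in>V. of_nat (degree E w) * f w)"
    using fE by (simp add: sum.If_cases degree_def Int_def conj_commute)
  finally show ?thesis .
qed

lemma handshake:
  assumes "simple_graph V E"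
  shows "(\<Sum>w\<in>V. degree E w) = 2 * card E"
proof -
  have "(\<Sum>w\<in>V. degree E w) = (\<Sum>e\<in>E. \<Sum>w\<in>e. 1::nat)"
    using sum_edges_eq_sum_degree[OF assms, of "\<lambda>_. 1::nat"] by simp
  also have "\<dots> = 2 * card E"
    using assms by (simp add: simple_graph_def)
  finally show ?thesis .
qed

lemma abs_diff_le_weights:
  fixes z :: "nat \<Rightarrow> real"
  assumes "i \<in> I" "j \<in> I"
    and "\<forall>i\<in>I. z i \<ge> 0"
    and "\<forall>i\<in>I. \<forall>j\<in>I. i < j \<longrightarrow> z i + z j \<ge> real j - real i"
  shows "\<bar>real i - real j\<bar> \<le> z i + z j"
  using assms by (cases i j rule: linorder_cases) force+

lemma irr_le_sum_weights:
  fixes z :: "nat \<Rightarrow> real"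
  assumes "simple_graph V E"
    and "\<forall>u\<in>V. degree E u \<le> \<Delta>"
    and "\<forall>i\<in>{1..\<Delta>}. z i \<ge> 0"
    and "\<forall>i\<in>{1..\<Delta>}. \<forall>j\<in>{1..\<Delta>}. i < j \<longrightarrow> z i + z j \<ge> real j - real i"
  shows "real_of_int (irr E) \<le> (\<Sum>w\<in>V. real (degree E w) * z (degree E w))"
proof -
  have fE: "finite E" using assms(1) by (rule simple_graph_finite_edges)
  have "real_of_int (edge_imbalance E e) \<le> (\<Sum>w\<in>e. z (degree E w))" if "e \<in> E" for e
  proof -
    obtain u v where e: "e = {u, v}" "u \<noteq> v"
      using \<open>e \<in> E\<close> assms(1) by (auto simp: simple_graph_def card_2_iff)
    have "u \<in> V" "v \<in> V" using \<open>e \<in> E\<close> assms(1) e by (auto simp: simple_graph_def)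
    then have "degree E u \<in> {1..\<Delta>}" "degree E v \<in> {1..\<Delta>}"
      using degree_ge_1[OF fE \<open>e \<in> E\<close>] assms(2) e by auto
    then have "\<bar>real (degree E u) - real (degree E v)\<bar> \<le> z (degree E u) + z (degree E v)"
      using abs_diff_le_weights assms(3,4) by blast
    then show ?thesis using e by (simp add: edge_imbalance_doubleton)
  qed
  then have "real_of_int (irr E) \<le> (\<Sum>e\<in>E. \<Sum>w\<in>e. z (degree E w))"
    unfolding irr_eq_sum_edge_imbalance of_int_sum by (rule sum_mono)
  also have "\<dots> = (\<Sum>w\<in>V. real (degree E w) * z (degree E w))"
    using sum_edges_eq_sum_degree[OF assms(1), of "\<lambda>w. z (degree E w)"] by simp
  finally show ?thesis .
qed

theorem mainTheorem5:
  fixes V :: "'a set" and E :: "'a set set" and \<Delta> :: nat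
    and x y :: real and z :: "nat \<Rightarrow> real"
  assumes "simple_graph V E"
    and "\<Delta> \<ge> 1"
    and "\<forall>u\<in>V. degree E u \<le> \<Delta>"
    and "x \<ge> 0"
    and "\<forall>i\<in>{1..\<Delta>}. z i \<ge> 0"
    and "\<forall>i\<in>{1..\<Delta>}. \<forall>j\<in>{1..\<Delta>}. i < j \<longrightarrow> z i + z j \<ge> real j - real i"
    and "\<forall>i\<in>{1..\<Delta>}. x + real i * y \<ge> real i * z i"
  shows "real_of_int (irr E) \<le> real (card V) * x + 2 * real (card E) * y"
proof -
  have vertex_charge: "real (degree E w) * z (degree E w) \<le> x + real (degree E w) * y"
    if "w \<in> V" for w
    using that assms(3,4,7) by (cases "degree E w = 0") auto
  have "real_of_int (irr E) \<le> (\<Sum>w\<in>V. real (degree E w) * z (degree E w))"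
    using irr_le_sum_weights assms(1,3,5,6) by blast
  also have "\<dots> \<le> (\<Sum>w\<in>V. x + real (degree E w) * y)"
    using vertex_charge by (rule sum_mono)
  also have "\<dots> = real (card V) * x + real (\<Sum>w\<in>V. degree E w) * y"
    by (simp add: sum.distrib sum_distrib_right)
  also have "\<dots> = real (card V) * x + 2 * real (card E) * y"
    using handshake[OF assms(1)] by simp
  finally show ?thesis .
qed

end
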